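(* Let $\mathcal{L}$ be a nonempty set and $\mathcal{C}: 2^{\mathcal{L}}\to 2^{\mathcal{L}}$ a C-logics. If $A\subseteq B\subseteq\mathcal{L}$ and $A$ is inconsistent, then $B$ is inconsistent.
   Context: A C-logics is a map $\mathcal{C}: 2^{\mathcal{L}}\to 2^{\mathcal{L}}$ satisfying Inclusion ($A\subseteq\mathcal{C}(A)$) and Cumulativity ($A\subseteq B\subseteq\mathcal{C}(A)\Rightarrow\mathcal{C}(A)=\mathcal{C}(B)$) for all $A,B\subseteq\mathcal{L}$. A set $A\subseteq\mathcal{L}$ is inconsistent iff $\mathcal{C}(A)=\mathcal{L}$, consistent otherwise. *)

theory Defs
  imports Main
begin

definition C_logics :: "'a set \<Rightarrow> ('a set \<Rightarrow> 'a set) \<Rightarrow> bool" where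
  "C_logics L C \<longleftrightarrow>
     (\<forall>A. A \<subseteq> L \<longrightarrow> C A \<subseteq> L) \<and>
     (\<forall>A. A \<subseteq> L \<longrightarrow> A \<subseteq> C A) \<and>
     (\<forall>A B. A \<subseteq> L \<longrightarrow> B \<subseteq> L \<longrightarrow> A \<subseteq> B \<longrightarrow> B \<subseteq> C A \<longrightarrow> C A = C B)"

definition inconsistent :: "'a set \<Rightarrow> ('a set \<Rightarrow> 'a set) \<Rightarrow> 'a set \<Rightarrow> bool" where
  "inconsistent L C A \<longleftrightarrow> C A = L"

end

theory Submission
  imports Defs
begin

lemma C_logics_cumulativeD:
  assumes "C_logics L C" and "A \<subseteq> B" and "B \<subseteq> L" and "B \<subseteq> C A"
  shows "C A = C B"
  using assms unfolding C_logics_def by (meson order_trans)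

lemma inconsistent_mono:
  assumes "C_logics L C" and "A \<subseteq> B" and "B \<subseteq> L" and "inconsistent L C A"
  shows "inconsistent L C B"
proof -
  have "B \<subseteq> C A" using assms(3,4) unfolding inconsistent_def by simp
  with assms(1-3) have "C A = C B" by (rule C_logics_cumulativeD)
  with assms(4) show ?thesis unfolding inconsistent_def by simp
qed

theorem lemma4:
  fixes L :: "'a set" and C :: "'a set \<Rightarrow> 'a set" and A B :: "'a set"
  assumes "L \<noteq> {}"
    and "C_logics L C"
    and "A \<subseteq> B" and "B \<subseteq> L"
    and "inconsistent L C A"
  shows "inconsistent L C B"
  using assms(2-5) by (rule inconsistent_mono)

end
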